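(* Let $N\ge 2$ and let $c_2,\dots,c_N>0$ be real numbers; set $c_1=1$ and let $\Lambda_{\mathbf c}=\mathbb{Z}\oplus c_2\mathbb{Z}\oplus\cdots\oplus c_N\mathbb{Z}\subset\mathbb{R}^N$. Let $\Lambda\subset\mathbb{R}^{N-1}$ be a full-rank lattice, and let $L^*=(l^*_{ij})_{1\le i,j\le N-1}$ be a lower triangular generator matrix (rows are basis vectors) of the dual lattice $\Lambda^*$. For $w\in\mathbb{N}$ let $L_w^*$ be the $(N-1)\times N$ real matrix with entries $$(L_w^* )_{ij}=\frac{\lfloor w\,c_j\,l^*_{ij}\rfloor}{c_j}\ \ (1\le j\le i),\qquad (L_w^* )_{i,i+1}=\frac{1}{c_{i+1}},\qquad (L_w^* )_{ij}=0\ \ (j\ge i+2),$$ for $i=1,\dots,N-1$, and let $\Lambda_w^*$ be the lattice generated by its rows. Then: (i) for each $w$ there exist integers $u_2,\dots,u_N$ such that, with $\hat{\mathbf u}=(1,u_2c_2,\dots,u_Nc_N)$, the lattice $\Lambda_w^*$ equals the dual lattice $\big(P_{\hat{\mathbf u}^\perp}(\Lambda_{\mathbf c})\big)^*$ of the orthogonal projection of $\Lambda_{\mathbf c}$ onto the hyperplane $\hat{\mathbf u}^\perp$; equivalently, $\Lambda_w^*$ is also generated by the rows of the matrix whose $(i-1)$-th row is $-u_i\mathbf e_1+\frac{1}{c_i}\mathbf e_i$, $i=2,\dots,N$ (with $\mathbf e_k$ the standard basis of $\mathbb{R}^N$); (ii) $\frac{1}{w^2}L_w^*(L_w^* )^t\to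 L^*(L^* )^t$ as $w\to\infty$.
   Context: For a lattice $\Gamma\subset\mathbb{R}^N$, its dual is $\Gamma^*=\{\mathbf x\in\operatorname{span}(\Gamma):\langle\mathbf x,\mathbf y\rangle\in\mathbb{Z}\ \forall\mathbf y\in\Gamma\}$, where $\operatorname{span}(\Gamma)$ is the real subspace spanned by $\Gamma$. For a nonzero vector $\hat{\mathbf u}\in\mathbb{R}^N$, $P_{\hat{\mathbf u}^\perp}(\mathbf n)=\mathbf n\big(I_N-\frac{\hat{\mathbf u}^t\hat{\mathbf u}}{\hat{\mathbf u}\hat{\mathbf u}^t}\big)$ (row vectors) is the orthogonal projection onto the hyperplane orthogonal to $\hat{\mathbf u}$; $P_{\hat{\mathbf u}^\perp}(\Lambda_{\mathbf c})$ denotes the image of $\Lambda_{\mathbf c}$ under this projection (a lattice in $\hat{\mathbf u}^\perp$ for $\hat{\mathbf u}$ of the given form). $\lfloor\cdot\rfloor$ is the floor function. *)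

theory Defs
  imports Complex_Main
begin

text \<open>Vectors in R^n are modelled as functions nat => real, with components
  indexed by 1..n and (for all vectors we construct) zero outside 1..n.\<close>

definition ip :: "nat \<Rightarrow> (nat \<Rightarrow> real) \<Rightarrow> (nat \<Rightarrow> real) \<Rightarrow> real" where
  "ip n x y = (\<Sum>k=1..n. x k * y k)"

definition gen_lattice :: "nat \<Rightarrow> nat \<Rightarrow> (nat \<Rightarrow> nat \<Rightarrow> real) \<Rightarrow> (nat \<Rightarrow> real) set" where
  "gen_lattice n m v = {x. \<exists>a::nat \<Rightarrow> int.
      x = (\<lambda>k. if k \<in> {1..n} then (\<Sum>i=1..m. of_int (a i) * v i k) else 0)}"

definition lin_indep :: "nat \<Rightarrow> nat \<Rightarrow> (nat \<Rightarrow> nat \<Rightarrow> real) \<Rightarrow> bool" where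
  "lin_indep n m v \<longleftrightarrow> (\<forall>a::nat \<Rightarrow> real.
      (\<forall>k\<in>{1..n}. (\<Sum>i=1..m. a i * v i k) = 0) \<longrightarrow> (\<forall>i\<in>{1..m}. a i = 0))"

definition rspan :: "(nat \<Rightarrow> real) set \<Rightarrow> (nat \<Rightarrow> real) set" where
  "rspan G = {x. \<exists>S f. finite S \<and> S \<subseteq> G \<and> x = (\<lambda>k. \<Sum>y\<in>S. f y * y k)}"

definition dual :: "nat \<Rightarrow> (nat \<Rightarrow> real) set \<Rightarrow> (nat \<Rightarrow> real) set" where
  "dual n G = {x \<in> rspan G. \<forall>y\<in>G. ip n x y \<in> \<int>}"

definition proj_perp :: "nat \<Rightarrow> (nat \<Rightarrow> real) \<Rightarrow> (nat \<Rightarrow> real) \<Rightarrow> (nat \<Rightarrow> real)" where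
  "proj_perp n u x = (\<lambda>k. x k - (ip n x u / ip n u u) * u k)"

definition Lambda_c :: "nat \<Rightarrow> (nat \<Rightarrow> real) \<Rightarrow> (nat \<Rightarrow> real) set" where
  "Lambda_c N c = gen_lattice N N (\<lambda>i k. if k = i then c i else 0)"

definition Lw :: "(nat \<Rightarrow> real) \<Rightarrow> (nat \<Rightarrow> nat \<Rightarrow> real) \<Rightarrow> nat \<Rightarrow> nat \<Rightarrow> nat \<Rightarrow> real" where
  "Lw c l w i j =
     (if j \<le> i then of_int \<lfloor>real w * c j * l i j\<rfloor> / c j
      else if j = i + 1 then 1 / c (i + 1) else 0)"

definition uhat :: "nat \<Rightarrow> (nat \<Rightarrow> real) \<Rightarrow> (nat \<Rightarrow> int) \<Rightarrow> (nat \<Rightarrow> real)" where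
  "uhat N c u = (\<lambda>k. if k = 1 then 1 else if k \<in> {2..N} then of_int (u k) * c k else 0)"

end

theory Submission
  imports Defs
begin

text \<open>Put \<open>m i j = \<lfloor>w c\<^sub>j l\<^sub>i\<^sub>j\<rfloor>\<close>. If the integers \<open>u\<close> are chosen recursively by
  \<open>u (i+1) = - (m i 1 + m i 2 u 2 + \<dots> + m i i u i)\<close>, then the \<open>i\<close>-th row of \<open>L\<^sub>w\<^sup>*\<close> is
  \<open>r\<^sub>i = - u (i+1) e\<^sub>1 + e\<^sub>i\<^sub>+\<^sub>1 / c\<^sub>i\<^sub>+\<^sub>1\<close> plus an integer combination of \<open>r\<^sub>1, \<dots>, r\<^sub>i\<^sub>-\<^sub>1\<close>,
  so the two matrices generate the same lattice. The rows \<open>r\<^sub>i\<close> generate the vectors of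
  \<open>\<Lambda>\<^sub>c\<^sup>*\<close> orthogonal to \<open>\<^bold>u\<close>, and for a lattice \<open>\<Gamma>\<close> spanning the space the dual of its
  projection onto \<open>\<^bold>u\<^sup>\<bottom>\<close> is \<open>\<Gamma>\<^sup>* \<inter> \<^bold>u\<^sup>\<bottom>\<close>. Part (ii) holds entrywise, since
  \<open>\<lfloor>w a\<rfloor> / w \<longlonglongrightarrow> a\<close> while the superdiagonal entries stay bounded.\<close>

section \<open>Lattices generated by rows\<close>

definition trunc :: "nat \<Rightarrow> (nat \<Rightarrow> real) \<Rightarrow> nat \<Rightarrow> real" where
  "trunc n f = (\<lambda>k. if k \<in> {1..n} then f k else 0)"

definition zero_outside :: "nat \<Rightarrow> (nat \<Rightarrow> real) \<Rightarrow> bool" where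
  "zero_outside n x \<longleftrightarrow> (\<forall>k. k \<notin> {1..n} \<longrightarrow> x k = 0)"

lemma gen_lattice_iff:
  "x \<in> gen_lattice n m v \<longleftrightarrow> (\<exists>a. x = trunc n (\<lambda>k. \<Sum>i=1..m. of_int (a i) * v i k))"
  by (simp only: gen_lattice_def trunc_def mem_Collect_eq)

lemma gen_lattice_zero: "(\<lambda>_. 0) \<in> gen_lattice n m v"
  unfolding gen_lattice_iff by (rule exI[of _ "\<lambda>_. 0"]) (simp add: trunc_def)

lemma gen_lattice_add:
  assumes "x \<in> gen_lattice n m v" "y \<in> gen_lattice n m v"
  shows "(\<lambda>k. x k + y k) \<in> gen_lattice n m v"
proof -
  obtain a b where "x = trunc n (\<lambda>k. \<Sum>i=1..m. of_int (a i) * v i k)"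
    and "y = trunc n (\<lambda>k. \<Sum>i=1..m. of_int (b i) * v i k)"
    using assms unfolding gen_lattice_iff by blast
  then show ?thesis
    unfolding gen_lattice_iff
    by (intro exI[of _ "\<lambda>i. a i + b i"]) (auto simp: trunc_def algebra_simps sum.distrib)
qed

lemma gen_lattice_scale:
  assumes "x \<in> gen_lattice n m v"
  shows "(\<lambda>k. of_int z * x k) \<in> gen_lattice n m v"
proof -
  obtain a where "x = trunc n (\<lambda>k. \<Sum>i=1..m. of_int (a i) * v i k)"
    using assms unfolding gen_lattice_iff by blast
  then show ?thesis
    unfolding gen_lattice_iff
    by (intro exI[of _ "\<lambda>i. z * a i"]) (auto simp: trunc_def algebra_simps sum_distrib_left)
qed

lemma gen_lattice_sum:
  assumes "finite A" "\<And>j. j \<in> A \<Longrightarrow> g j \<in> gen_lattice n m v"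
  shows "(\<lambda>k. \<Sum>j\<in>A. g j k) \<in> gen_lattice n m v"
  using assms by (induction A rule: finite_induct) (simp_all add: gen_lattice_zero gen_lattice_add)

lemma gen_lattice_generator:
  assumes "i \<in> {1..m}"
  shows "trunc n (v i) \<in> gen_lattice n m v"
  unfolding gen_lattice_iff
proof (intro exI[of _ "\<lambda>j. if j = i then 1 else 0"] ext)
  fix k
  have "(\<Sum>j=1..m. of_int (if j = i then 1 else 0) * v j k) = (\<Sum>j=1..m. if j = i then v i k else 0)"
    by (rule sum.cong) auto
  also have "\<dots> = v i k"
    using assms by simp
  finally show "trunc n (v i) k = trunc n (\<lambda>k. \<Sum>j=1..m. of_int (if j = i then 1 else 0) * v j k) k"
    by (simp add: trunc_def)
qed

lemma gen_lattice_subset: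
  assumes "\<And>i. i \<in> {1..m'} \<Longrightarrow> trunc n (v' i) \<in> gen_lattice n m v"
  shows "gen_lattice n m' v' \<subseteq> gen_lattice n m v"
proof
  fix x assume "x \<in> gen_lattice n m' v'"
  then obtain a where "x = trunc n (\<lambda>k. \<Sum>i=1..m'. of_int (a i) * v' i k)"
    unfolding gen_lattice_iff by blast
  then have "x = (\<lambda>k. \<Sum>i\<in>{1..m'}. of_int (a i) * trunc n (v' i) k)"
    by (auto simp: trunc_def fun_eq_iff)
  also have "\<dots> \<in> gen_lattice n m v"
    by (intro gen_lattice_sum gen_lattice_scale assms) auto
  finally show "x \<in> gen_lattice n m v" .
qed

lemma gen_lattice_unitriangular_eq:
  fixes T :: "nat \<Rightarrow> nat \<Rightarrow> int"
  assumes rows: "\<And>i k. i \<in> {1..m} \<Longrightarrow> k \<in> {1..n} \<Longrightarrow>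
      v' i k = v i k + (\<Sum>j\<in>{1..<i}. of_int (T i j) * v j k)"
  shows "gen_lattice n m v' = gen_lattice n m v"
proof (rule subset_antisym; rule gen_lattice_subset)
  have trunc_rows: "trunc n (v' i) =
      (\<lambda>k. trunc n (v i) k + (\<Sum>j\<in>{1..<i}. of_int (T i j) * trunc n (v j) k))"
    if "i \<in> {1..m}" for i
    using rows[OF that] by (auto simp: trunc_def fun_eq_iff)
  show "trunc n (v' i) \<in> gen_lattice n m v" if i: "i \<in> {1..m}" for i
    unfolding trunc_rows[OF i]
    using i by (intro gen_lattice_add gen_lattice_generator gen_lattice_sum gen_lattice_scale) auto
  show "trunc n (v i) \<in> gen_lattice n m v'" if "i \<in> {1..m}" for i
    using that
  proof (induction i rule: less_induct)
    case (less i)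
    have "trunc n (v i) =
        (\<lambda>k. trunc n (v' i) k + (\<Sum>j\<in>{1..<i}. of_int (- T i j) * trunc n (v j) k))"
      using trunc_rows[OF less.prems] by (simp add: sum_negf)
    also have "\<dots> \<in> gen_lattice n m v'"
      using less by (intro gen_lattice_add gen_lattice_generator gen_lattice_sum gen_lattice_scale) auto
    finally show ?case .
  qed
qed

section \<open>Duals of orthogonal projections\<close>

lemma rspan_base: "y \<in> G \<Longrightarrow> y \<in> rspan G"
  unfolding rspan_def by (intro CollectI exI[of _ "{y}"] exI[of _ "\<lambda>_. 1"]) auto

lemma rspan_sum:
  assumes "finite A" "g ` A \<subseteq> G"
  shows "(\<lambda>j. \<Sum>k\<in>A. a k * g k j) \<in> rspan G"
proof -
  have "(\<lambda>j. \<Sum>k\<in>A. a k * g k j) = (\<lambda>j. \<Sum>y\<in>g ` A. (\<Sum>k\<in>{k\<in>A. g k = y}. a k) * y j)"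
  proof
    fix j
    have "(\<Sum>k\<in>A. a k * g k j) = (\<Sum>y\<in>g ` A. \<Sum>k\<in>{k\<in>A. g k = y}. a k * g k j)"
      by (rule sum.image_gen[OF assms(1)])
    also have "\<dots> = (\<Sum>y\<in>g ` A. (\<Sum>k\<in>{k\<in>A. g k = y}. a k) * y j)"
      by (rule sum.cong) (auto simp: sum_distrib_right)
    finally show "(\<Sum>k\<in>A. a k * g k j) = (\<Sum>y\<in>g ` A. (\<Sum>k\<in>{k\<in>A. g k = y}. a k) * y j)" .
  qed
  then show ?thesis
    unfolding rspan_def
    by (intro CollectI exI[of _ "g ` A"] exI[of _ "\<lambda>y. \<Sum>k\<in>{k\<in>A. g k = y}. a k"]
        conjI finite_imageI assms)
qed

lemma ip_sum_left:
  assumes "finite S"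
  shows "ip n (\<lambda>k. \<Sum>y\<in>S. f y * y k) v = (\<Sum>y\<in>S. f y * ip n y v)"
  unfolding ip_def sum_distrib_left sum_distrib_right by (subst sum.swap) (simp add: mult.assoc)

lemma ip_proj_perp_right:
  "ip n x (proj_perp n u z) = ip n x z - (ip n z u / ip n u u) * ip n x u"
  unfolding proj_perp_def ip_def
  by (simp add: right_diff_distrib sum_subtractf sum_distrib_left mult.left_commute)

lemma ip_proj_perp_self:
  assumes "ip n u u \<noteq> 0"
  shows "ip n (proj_perp n u z) u = 0"
proof -
  have "ip n (proj_perp n u z) u = ip n z u - (ip n z u / ip n u u) * ip n u u"
    unfolding proj_perp_def ip_def
    by (simp add: left_diff_distrib sum_subtractf sum_distrib_left mult.assoc)
  then show ?thesis using assms by simp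
qed

lemma proj_perp_sum:
  assumes "finite S"
  shows "proj_perp n u (\<lambda>k. \<Sum>y\<in>S. f y * y k) = (\<lambda>k. \<Sum>y\<in>S. f y * proj_perp n u y k)"
proof
  fix k
  show "proj_perp n u (\<lambda>k. \<Sum>y\<in>S. f y * y k) k = (\<Sum>y\<in>S. f y * proj_perp n u y k)"
    unfolding proj_perp_def ip_sum_left[OF assms]
    by (simp add: right_diff_distrib sum_subtractf sum_distrib_right sum_divide_distrib mult.assoc)
qed

text \<open>For \<open>x \<bottom> u\<close> we have \<open>P x = x\<close> and \<open>\<langle>x, P y\<rangle> = \<langle>x, y\<rangle>\<close>; the spanning hypothesis
  puts every \<open>x \<in> span (P G)\<close> back into \<open>span G\<close>.\<close>

lemma dual_proj_perp_subset:
  assumes span: "rspan G = {x. zero_outside n x}"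
    and u: "zero_outside n u" "ip n u u \<noteq> 0"
  shows "dual n (proj_perp n u ` G) \<subseteq> {x \<in> dual n G. ip n x u = 0}"
proof
  let ?P = "proj_perp n u"
  fix x
  assume "x \<in> dual n (?P ` G)"
  then have x_span: "x \<in> rspan (?P ` G)" and x_int: "\<And>y. y \<in> G \<Longrightarrow> ip n x (?P y) \<in> \<int>"
    unfolding dual_def by auto
  obtain S f where S: "finite S" "S \<subseteq> ?P ` G" and x: "x = (\<lambda>k. \<Sum>y\<in>S. f y * y k)"
    using x_span unfolding rspan_def by blast
  have S_zero: "y k = 0" if "y \<in> S" "k \<notin> {1..n}" for y k
  proof -
    obtain z where z: "z \<in> G" "y = ?P z" using S \<open>y \<in> S\<close> by blast
    have "zero_outside n z" using rspan_base[OF z(1)] span by blast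
    then show ?thesis
      using u(1) z(2) that(2) unfolding zero_outside_def proj_perp_def by simp
  qed
  have "zero_outside n x"
    unfolding x zero_outside_def using S_zero by (simp add: sum.neutral)
  then have "x \<in> rspan G" using span by blast
  moreover have x_perp: "ip n x u = 0"
  proof -
    have "\<forall>y\<in>S. ip n y u = 0" using S(2) ip_proj_perp_self[OF u(2)] by blast
    then show ?thesis unfolding x ip_sum_left[OF S(1)] by simp
  qed
  moreover have "ip n x y \<in> \<int>" if "y \<in> G" for y
    using x_int[OF that] by (simp add: ip_proj_perp_right x_perp)
  ultimately show "x \<in> {x \<in> dual n G. ip n x u = 0}"
    unfolding dual_def by blast
qed

lemma perp_dual_subset_dual_proj_perp:
  "{x \<in> dual n G. ip n x u = 0} \<subseteq> dual n (proj_perp n u ` G)"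
proof
  let ?P = "proj_perp n u"
  fix x
  assume "x \<in> {x \<in> dual n G. ip n x u = 0}"
  then have x_span: "x \<in> rspan G" and x_int: "\<And>y. y \<in> G \<Longrightarrow> ip n x y \<in> \<int>"
    and x_perp: "ip n x u = 0"
    unfolding dual_def by auto
  obtain S f where S: "finite S" "S \<subseteq> G" and x: "x = (\<lambda>k. \<Sum>y\<in>S. f y * y k)"
    using x_span unfolding rspan_def by blast
  have "x = ?P x"
    using x_perp by (simp add: proj_perp_def)
  also have "\<dots> = (\<lambda>k. \<Sum>y\<in>S. f y * ?P y k)"
    unfolding x by (rule proj_perp_sum[OF S(1)])
  also have "\<dots> \<in> rspan (?P ` G)"
    using S by (intro rspan_sum) auto
  finally have "x \<in> rspan (?P ` G)" .
  moreover have "ip n x y \<in> \<int>" if "y \<in> ?P ` G" for y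
    using that x_int by (auto simp: ip_proj_perp_right x_perp)
  ultimately show "x \<in> dual n (?P ` G)"
    unfolding dual_def by blast
qed

lemma dual_proj_perp:
  assumes "rspan G = {x. zero_outside n x}" "zero_outside n u" "ip n u u \<noteq> 0"
  shows "dual n (proj_perp n u ` G) = {x \<in> dual n G. ip n x u = 0}"
  using dual_proj_perp_subset[OF assms] perp_dual_subset_dual_proj_perp by (rule subset_antisym)

section \<open>The lattice \<open>\<Lambda>\<^sub>c\<close> and the projection direction\<close>

lemma Lambda_c_eq: "Lambda_c N c = {x. \<exists>b::nat \<Rightarrow> int. x = trunc N (\<lambda>k. of_int (b k) * c k)}"
proof -
  have "(\<Sum>i=1..N. of_int (b i) * (if k = i then c i else 0)) = of_int (b k) * c k"
    if "k \<in> {1..N}" for b :: "nat \<Rightarrow> int" and k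
  proof -
    have "(\<Sum>i=1..N. of_int (b i) * (if k = i then c i else 0)) = (\<Sum>i=1..N. if i = k then of_int (b k) * c k else 0)"
      by (rule sum.cong) auto
    then show ?thesis using that by simp
  qed
  then have "trunc N (\<lambda>k. \<Sum>i=1..N. of_int (b i) * (if k = i then c i else 0)) = trunc N (\<lambda>k. of_int (b k) * c k)"
    for b :: "nat \<Rightarrow> int"
    by (simp add: trunc_def fun_eq_iff)
  then show ?thesis
    unfolding Lambda_c_def by (simp add: set_eq_iff gen_lattice_iff)
qed

lemma unit_in_Lambda_c:
  assumes "k \<in> {1..N}"
  shows "(\<lambda>j. if j = k then c k else 0) \<in> Lambda_c N c"
  unfolding Lambda_c_eq
  by (intro CollectI exI[of _ "\<lambda>j. if j = k then 1 else 0"]) (use assms in \<open>auto simp: trunc_def\<close>)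

lemma ip_unit_right:
  assumes "k \<in> {1..n}"
  shows "ip n x (\<lambda>j. if j = k then a else 0) = x k * a"
proof -
  have "ip n x (\<lambda>j. if j = k then a else 0) = (\<Sum>j=1..n. if j = k then x k * a else 0)"
    unfolding ip_def by (rule sum.cong) auto
  then show ?thesis using assms by simp
qed

lemma rspan_Lambda_c:
  assumes c_nz: "\<forall>k\<in>{1..N}. c k \<noteq> 0"
  shows "rspan (Lambda_c N c) = {x. zero_outside N x}"
proof (intro set_eqI iffI CollectI)
  fix x assume "x \<in> rspan (Lambda_c N c)"
  then obtain S f where S: "S \<subseteq> Lambda_c N c" and x: "x = (\<lambda>k. \<Sum>y\<in>S. f y * y k)"
    unfolding rspan_def by blast
  have "y k = 0" if "y \<in> S" "k \<notin> {1..N}" for y k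
    using S that unfolding Lambda_c_eq by (auto simp: trunc_def)
  then show "zero_outside N x"
    unfolding zero_outside_def x by (simp add: sum.neutral)
next
  fix x assume x: "x \<in> {x. zero_outside N x}"
  let ?e = "\<lambda>k j. if j = k then c k else 0"
  have "x = (\<lambda>j. \<Sum>k\<in>{1..N}. (x k / c k) * ?e k j)"
  proof
    fix j
    have "(\<Sum>k\<in>{1..N}. (x k / c k) * ?e k j) = (\<Sum>k\<in>{1..N}. if k = j then x j else 0)"
      by (rule sum.cong) (auto simp: c_nz)
    also have "\<dots> = x j"
      using x by (auto simp: zero_outside_def)
    finally show "x j = (\<Sum>k\<in>{1..N}. (x k / c k) * ?e k j)" by simp
  qed
  also have "\<dots> \<in> rspan (Lambda_c N c)"
    by (intro rspan_sum) (auto intro: unit_in_Lambda_c)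
  finally show "x \<in> rspan (Lambda_c N c)" .
qed

lemma dual_Lambda_c:
  assumes c_nz: "\<forall>k\<in>{1..N}. c k \<noteq> 0"
  shows "dual N (Lambda_c N c) = {x. zero_outside N x \<and> (\<forall>k\<in>{1..N}. x k * c k \<in> \<int>)}"
proof (intro set_eqI iffI CollectI conjI ballI)
  fix x assume x: "x \<in> dual N (Lambda_c N c)"
  then show "zero_outside N x"
    using rspan_Lambda_c[OF c_nz] unfolding dual_def by blast
  fix k assume k: "k \<in> {1..N}"
  then have "ip N x (\<lambda>j. if j = k then c k else 0) \<in> \<int>"
    using x unit_in_Lambda_c unfolding dual_def by blast
  then show "x k * c k \<in> \<int>"
    by (simp add: ip_unit_right[OF k])
next
  fix x assume x: "x \<in> {x. zero_outside N x \<and> (\<forall>k\<in>{1..N}. x k * c k \<in> \<int>)}"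
  have "ip N x y \<in> \<int>" if y: "y \<in> Lambda_c N c" for y
  proof -
    obtain b :: "nat \<Rightarrow> int" where "y = trunc N (\<lambda>k. of_int (b k) * c k)"
      using y unfolding Lambda_c_eq by blast
    then have "ip N x y = (\<Sum>k=1..N. (x k * c k) * of_int (b k))"
      unfolding ip_def trunc_def by (intro sum.cong) auto
    also have "\<dots> \<in> \<int>"
      using x by (auto intro!: Ints_sum Ints_mult[OF _ Ints_of_int])
    finally show ?thesis .
  qed
  then show "x \<in> dual N (Lambda_c N c)"
    using x rspan_Lambda_c[OF c_nz] unfolding dual_def by blast
qed

lemma sum_atLeast1_split:
  fixes f :: "nat \<Rightarrow> 'a::comm_monoid_add"
  assumes "N \<ge> 1"
  shows "(\<Sum>k=1..N. f k) = f 1 + (\<Sum>i=1..N-1. f (i + 1))"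
proof -
  have "(\<Sum>k=1..N. f k) = f 1 + (\<Sum>k=Suc 1..Suc (N-1). f k)"
    using assms by (simp add: sum.atLeast_Suc_atMost)
  also have "(\<Sum>k=Suc 1..Suc (N-1). f k) = (\<Sum>i=1..N-1. f (i + 1))"
    by (subst sum.shift_bounds_cl_Suc_ivl) simp
  finally show ?thesis .
qed

lemma zero_outside_uhat: "N \<ge> 1 \<Longrightarrow> zero_outside N (uhat N c u)"
  by (auto simp: zero_outside_def uhat_def)

lemma ip_uhat:
  assumes "N \<ge> 1"
  shows "ip N x (uhat N c u) = x 1 + (\<Sum>i=1..N-1. x (i + 1) * c (i + 1) * of_int (u (i + 1)))"
  unfolding ip_def sum_atLeast1_split[OF assms]
  by (auto simp: uhat_def intro!: sum.cong)

lemma ip_uhat_self_pos: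
  assumes "N \<ge> 1"
  shows "ip N (uhat N c u) (uhat N c u) > 0"
proof -
  have "(\<Sum>i=1..N-1. uhat N c u (i + 1) * uhat N c u (i + 1)) \<ge> 0"
    by (intro sum_nonneg) simp
  then show ?thesis
    unfolding ip_def sum_atLeast1_split[OF assms] by (simp add: uhat_def)
qed

definition dual_proj_basis :: "(nat \<Rightarrow> real) \<Rightarrow> (nat \<Rightarrow> int) \<Rightarrow> nat \<Rightarrow> nat \<Rightarrow> real" where
  "dual_proj_basis c u = (\<lambda>i k. (if k = 1 then - of_int (u (i + 1)) else 0)
                  + (if k = i + 1 then 1 / c (i + 1) else 0))"

lemma dual_proj_basis_combination:
  assumes "k \<ge> 1"
  shows "(\<Sum>i=1..m. of_int (a i) * dual_proj_basis c u i k) =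
    (if k = 1 then - (\<Sum>i=1..m. of_int (a i) * of_int (u (i + 1)))
     else if k \<le> m + 1 then of_int (a (k - 1)) / c k else 0)"
proof (cases "k = 1")
  case True
  then show ?thesis by (simp add: dual_proj_basis_def sum_negf)
next
  case False
  then have "(\<Sum>i=1..m. of_int (a i) * dual_proj_basis c u i k) =
      (\<Sum>i=1..m. if i = k - 1 then of_int (a (k - 1)) / c k else 0)"
    using assms by (intro sum.cong) (auto simp: dual_proj_basis_def)
  then show ?thesis using False assms by force
qed

lemma gen_lattice_dual_proj_basisD:
  assumes N: "N \<ge> 1" and c1: "c 1 = 1" and c_nz: "\<forall>k\<in>{1..N}. c k \<noteq> 0"
    and "x \<in> gen_lattice N (N - 1) (dual_proj_basis c u)"
  shows "zero_outside N x" and "\<forall>k\<in>{1..N}. x k * c k \<in> \<int>"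
    and "x 1 + (\<Sum>i=1..N-1. x (i + 1) * c (i + 1) * of_int (u (i + 1))) = 0"
proof -
  obtain a where x: "x = trunc N (\<lambda>k. \<Sum>i=1..N-1. of_int (a i) * dual_proj_basis c u i k)"
    using assms(4) unfolding gen_lattice_iff by blast
  have x_first: "x 1 = - (\<Sum>i=1..N-1. of_int (a i) * of_int (u (i + 1)))"
    using N dual_proj_basis_combination[of 1] by (simp add: x trunc_def)
  have x_next: "x (i + 1) * c (i + 1) = of_int (a i)" if "i \<in> {1..N-1}" for i
    using that c_nz dual_proj_basis_combination[of "i + 1"] by (auto simp: x trunc_def)
  show "zero_outside N x"
    by (simp add: x trunc_def zero_outside_def)
  show "\<forall>k\<in>{1..N}. x k * c k \<in> \<int>"
  proof
    fix k assume k: "k \<in> {1..N}"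
    show "x k * c k \<in> \<int>"
    proof (cases "k = 1")
      case True
      have "x 1 \<in> \<int>"
        unfolding x_first by (intro Ints_minus Ints_sum Ints_mult Ints_of_int)
      then show ?thesis using True c1 by simp
    next
      case False
      then have "k - 1 \<in> {1..N-1}" "k - 1 + 1 = k"
        using k by auto
      then show ?thesis
        using x_next by (metis Ints_of_int)
    qed
  qed
  have "(\<Sum>i=1..N-1. x (i + 1) * c (i + 1) * of_int (u (i + 1))) =
      (\<Sum>i=1..N-1. of_int (a i) * of_int (u (i + 1)))"
    by (rule sum.cong) (simp_all only: x_next)
  then show "x 1 + (\<Sum>i=1..N-1. x (i + 1) * c (i + 1) * of_int (u (i + 1))) = 0"
    using x_first by simp
qed

lemma gen_lattice_dual_proj_basisI:
  assumes N: "N \<ge> 1" and c_nz: "\<forall>k\<in>{1..N}. c k \<noteq> 0"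
    and zero: "zero_outside N x" and int: "\<forall>k\<in>{1..N}. x k * c k \<in> \<int>"
    and perp: "x 1 + (\<Sum>i=1..N-1. x (i + 1) * c (i + 1) * of_int (u (i + 1))) = 0"
  shows "x \<in> gen_lattice N (N - 1) (dual_proj_basis c u)"
proof -
  define a where "a i = \<lfloor>x (i + 1) * c (i + 1)\<rfloor>" for i
  have a: "of_int (a i) = x (i + 1) * c (i + 1)" if "i \<in> {1..N-1}" for i
  proof -
    have "x (i + 1) * c (i + 1) \<in> \<int>" using int that by auto
    then show ?thesis unfolding a_def by (rule of_int_floor)
  qed
  have "x = trunc N (\<lambda>k. \<Sum>i=1..N-1. of_int (a i) * dual_proj_basis c u i k)"
  proof
    fix k
    consider "k \<notin> {1..N}" | "k = 1" | "k \<in> {2..N}" by fastforce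
    then show "x k = trunc N (\<lambda>k. \<Sum>i=1..N-1. of_int (a i) * dual_proj_basis c u i k) k"
    proof cases
      case 1
      then show ?thesis using zero by (auto simp: zero_outside_def trunc_def)
    next
      case 2
      have "(\<Sum>i=1..N-1. of_int (a i) * of_int (u (i + 1))) =
          (\<Sum>i=1..N-1. x (i + 1) * c (i + 1) * of_int (u (i + 1)))"
        by (rule sum.cong) (auto simp: a)
      then show ?thesis
        using 2 N perp dual_proj_basis_combination[where k=1 and m="N - 1" and a=a and c=c and u=u]
        by (simp add: trunc_def eq_neg_iff_add_eq_0)
    next
      case 3
      then have "k - 1 \<in> {1..N-1}" "k - 1 + 1 = k" "c k \<noteq> 0"
        using c_nz by auto
      then have "of_int (a (k - 1)) = x k * c k" "c k \<noteq> 0"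
        using a by metis+
      then show ?thesis
        using 3 dual_proj_basis_combination[of k] by (simp add: trunc_def)
    qed
  qed
  then show ?thesis
    unfolding gen_lattice_iff by blast
qed

lemma gen_lattice_dual_proj_basis:
  assumes N: "N \<ge> 1" and c1: "c 1 = 1" and c_nz: "\<forall>k\<in>{1..N}. c k \<noteq> 0"
  shows "gen_lattice N (N - 1) (dual_proj_basis c u) =
    {x \<in> dual N (Lambda_c N c). ip N x (uhat N c u) = 0}"
  unfolding dual_Lambda_c[OF c_nz] ip_uhat[OF N]
proof (intro set_eqI iffI)
  fix x assume "x \<in> gen_lattice N (N - 1) (dual_proj_basis c u)"
  then show "x \<in> {x \<in> {x. zero_outside N x \<and> (\<forall>k\<in>{1..N}. x k * c k \<in> \<int>)}.
      x 1 + (\<Sum>i=1..N-1. x (i + 1) * c (i + 1) * of_int (u (i + 1))) = 0}"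
    using gen_lattice_dual_proj_basisD[OF N c1 c_nz] by simp
qed (use gen_lattice_dual_proj_basisI[OF N c_nz] in simp)

lemma gen_lattice_dual_proj_basis_eq_dual_proj:
  assumes N: "N \<ge> 1" and c1: "c 1 = 1" and c_nz: "\<forall>k\<in>{1..N}. c k \<noteq> 0"
  shows "gen_lattice N (N - 1) (dual_proj_basis c u) = dual N (proj_perp N (uhat N c u) ` Lambda_c N c)"
proof -
  have "dual N (proj_perp N (uhat N c u) ` Lambda_c N c) =
      {x \<in> dual N (Lambda_c N c). ip N x (uhat N c u) = 0}"
    using ip_uhat_self_pos[OF N, of c u]
    by (intro dual_proj_perp rspan_Lambda_c[OF c_nz] zero_outside_uhat[OF N]) simp
  then show ?thesis
    using gen_lattice_dual_proj_basis[where c=c, OF N c1 c_nz] by simp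
qed

section \<open>Row reduction of \<open>L\<^sub>w\<^sup>*\<close>\<close>

lemma triangular_recursion_solvable:
  assumes causal: "\<And>i u v. (\<And>j. j \<le> i \<Longrightarrow> u j = v j) \<Longrightarrow> F i u = F i v"
  shows "\<exists>u. \<forall>i<M. u (Suc i) = F i u"
proof (induction M)
  case 0
  show ?case by simp
next
  case (Suc M)
  then obtain u where u: "\<forall>i<M. u (Suc i) = F i u" by blast
  define u' where "u' = u(Suc M := F M u)"
  have agree: "u' j = u j" if "j \<le> i" "i \<le> M" for i j
    using that by (simp add: u'_def)
  have "u' (Suc i) = F i u'" if "i < Suc M" for i
  proof (cases "i = M")
    case True
    then show ?thesis using causal[of M u' u] agree by (simp add: u'_def)
  next
    case False
    then have "i < M" using that by simp
    then show ?thesis using u causal[of i u' u] agree by (simp add: u'_def)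
  qed
  then show ?case by blast
qed

definition Lw_floor :: "(nat \<Rightarrow> real) \<Rightarrow> (nat \<Rightarrow> nat \<Rightarrow> real) \<Rightarrow> nat \<Rightarrow> nat \<Rightarrow> nat \<Rightarrow> int" where
  "Lw_floor c l w i j = \<lfloor>real w * c j * l i j\<rfloor>"

lemma Lw_row_unitriangular:
  assumes c1: "c 1 = 1" and i: "i \<ge> 1" and k: "k \<ge> 1"
    and u: "u (i + 1) = - (Lw_floor c l w i 1 + (\<Sum>j\<in>{1..<i}. Lw_floor c l w i (j + 1) * u (j + 1)))"
  shows "Lw c l w i k = dual_proj_basis c u i k +
    (\<Sum>j\<in>{1..<i}. of_int (Lw_floor c l w i (j + 1)) * dual_proj_basis c u j k)"
proof -
  have "{1..<i} = {1..i-1}" using i by auto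
  then have comb: "(\<Sum>j\<in>{1..<i}. of_int (Lw_floor c l w i (j + 1)) * dual_proj_basis c u j k) =
      (if k = 1 then - (\<Sum>j\<in>{1..<i}. of_int (Lw_floor c l w i (j + 1)) * of_int (u (j + 1)))
       else if k \<le> i then of_int (Lw_floor c l w i k) / c k else 0)"
    using i k dual_proj_basis_combination[where k=k and m="i - 1" and a="\<lambda>j. Lw_floor c l w i (j + 1)"]
    by simp
  show ?thesis
    using c1 i u unfolding comb by (auto simp: Lw_def Lw_floor_def dual_proj_basis_def)
qed

lemma gen_lattice_Lw_eq_dual_proj_basis:
  assumes c1: "c 1 = 1"
  shows "\<exists>u. gen_lattice N (N - 1) (Lw c l w) = gen_lattice N (N - 1) (dual_proj_basis c u)"
proof -
  let ?F = "\<lambda>i u. - (Lw_floor c l w i 1 + (\<Sum>j\<in>{1..<i}. Lw_floor c l w i (j + 1) * u (j + 1)))"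
  obtain u where u: "\<forall>i<N. u (Suc i) = ?F i u"
    using triangular_recursion_solvable[of ?F N] by (auto intro!: sum.cong)
  have "gen_lattice N (N - 1) (Lw c l w) = gen_lattice N (N - 1) (dual_proj_basis c u)"
  proof (rule gen_lattice_unitriangular_eq[where T="\<lambda>i j. Lw_floor c l w i (j + 1)"])
    fix i k
    assume "i \<in> {1..N - 1}" "k \<in> {1..N}"
    then show "Lw c l w i k = dual_proj_basis c u i k +
        (\<Sum>j\<in>{1..<i}. of_int (Lw_floor c l w i (j + 1)) * dual_proj_basis c u j k)"
      using u by (intro Lw_row_unitriangular[where c=c, OF c1]) auto
  qed
  then show ?thesis by blast
qed

section \<open>The rescaled Gram matrix\<close>

lemma floor_scaled_tendsto: "(\<lambda>w::nat. of_int \<lfloor>real w * a\<rfloor> / real w) \<longlonglongrightarrow> a"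
proof (rule tendsto_sandwich)
  have "(\<lambda>w::nat. a - 1 / real w) \<longlonglongrightarrow> a - 0"
    by (intro tendsto_diff tendsto_const lim_inverse_n')
  then show "(\<lambda>w::nat. a - 1 / real w) \<longlonglongrightarrow> a" by simp
  have bounds: "a - 1 / real w \<le> of_int \<lfloor>real w * a\<rfloor> / real w \<and> of_int \<lfloor>real w * a\<rfloor> / real w \<le> a"
    if "w \<ge> 1" for w :: nat
  proof
    have w: "real w > 0" using that by simp
    have "a - 1 / real w = (real w * a - 1) / real w"
      using w by (simp add: field_simps)
    also have "\<dots> \<le> of_int \<lfloor>real w * a\<rfloor> / real w"
      using w by (intro divide_right_mono) linarith+
    finally show "a - 1 / real w \<le> of_int \<lfloor>real w * a\<rfloor> / real w" .
    have "of_int \<lfloor>real w * a\<rfloor> / real w \<le> real w * a / real w"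
      using w by (intro divide_right_mono) linarith+
    then show "of_int \<lfloor>real w * a\<rfloor> / real w \<le> a"
      using w by simp
  qed
  show "\<forall>\<^sub>F w in sequentially. a - 1 / real w \<le> of_int \<lfloor>real w * a\<rfloor> / real w"
    "\<forall>\<^sub>F w in sequentially. of_int \<lfloor>real w * a\<rfloor> / real w \<le> a"
    using bounds by (auto intro: eventually_sequentiallyI[of 1])
qed (rule tendsto_const)

lemma Lw_scaled_tendsto:
  assumes "c k \<noteq> 0"
  shows "(\<lambda>w. Lw c l w i k / real w) \<longlonglongrightarrow> (if k \<le> i then l i k else 0)"
proof (cases "k \<le> i")
  case True
  have "(\<lambda>w::nat. (of_int \<lfloor>real w * (c k * l i k)\<rfloor> / real w) / c k) \<longlonglongrightarrow> (c k * l i k) / c k"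
    by (intro tendsto_divide floor_scaled_tendsto tendsto_const assms)
  then show ?thesis
    using True assms by (simp add: Lw_def mult.assoc mult.commute[of "c k"])
next
  case False
  have "(\<lambda>w::nat. (if k = i + 1 then 1 / c (i + 1) else 0) * (1 / real w)) \<longlonglongrightarrow> 0"
    using tendsto_mult[OF tendsto_const lim_inverse_n'] by simp
  then show ?thesis
    using False by (simp add: Lw_def)
qed

lemma Lw_gram_tendsto:
  assumes c_nz: "\<forall>k\<in>{1..N}. c k \<noteq> 0"
    and lower: "\<forall>i\<in>{1..N-1}. \<forall>j\<in>{1..N-1}. i < j \<longrightarrow> l i j = 0"
    and i: "i \<in> {1..N-1}" and j: "j \<in> {1..N-1}"
  shows "(\<lambda>w::nat. (1 / (real w)^2) * (\<Sum>k=1..N. Lw c l w i k * Lw c l w j k))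
          \<longlonglongrightarrow> (\<Sum>k=1..N-1. l i k * l j k)"
proof -
  have lim: "(\<lambda>w. \<Sum>k=1..N. (Lw c l w i k / real w) * (Lw c l w j k / real w))
      \<longlonglongrightarrow> (\<Sum>k=1..N. (if k \<le> i then l i k else 0) * (if k \<le> j then l j k else 0))"
    using c_nz by (intro tendsto_sum tendsto_mult Lw_scaled_tendsto) auto
  have "(if k \<le> i' then l i' k else 0) = (if k \<le> N - 1 then l i' k else 0)"
    if "i' \<in> {1..N-1}" "k \<in> {1..N}" for i' k
    using that lower by auto
  then have "(\<Sum>k=1..N. (if k \<le> i then l i k else 0) * (if k \<le> j then l j k else 0))
      = (\<Sum>k\<in>{1..N}. if k \<le> N - 1 then l i k * l j k else 0)"
    using i j by (intro sum.cong) auto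
  also have "\<dots> = (\<Sum>k\<in>{k\<in>{1..N}. k \<le> N - 1}. l i k * l j k)"
    by (rule sum.inter_filter[symmetric]) simp
  also have "{k\<in>{1..N}. k \<le> N - 1} = {1..N-1}"
    by auto
  finally show ?thesis
    using lim by (simp add: sum_distrib_left power2_eq_square)
qed

theorem theorem1:
  fixes N :: nat and c :: "nat \<Rightarrow> real"
    and B :: "nat \<Rightarrow> nat \<Rightarrow> real" and l :: "nat \<Rightarrow> nat \<Rightarrow> real"
  assumes N2: "N \<ge> 2"
    and c_pos: "\<forall>j\<in>{2..N}. c j > 0"
    and c1: "c 1 = 1"
    and B_basis: "lin_indep (N - 1) (N - 1) B"
    and L_basis: "lin_indep (N - 1) (N - 1) l"
    and L_gen: "gen_lattice (N - 1) (N - 1) l = dual (N - 1) (gen_lattice (N - 1) (N - 1) B)"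
    and L_lower: "\<forall>i\<in>{1..N-1}. \<forall>j\<in>{1..N-1}. i < j \<longrightarrow> l i j = 0"
  shows
    "(\<forall>w::nat. \<exists>u::nat \<Rightarrow> int.
        gen_lattice N (N - 1) (Lw c l w) =
          dual N (proj_perp N (uhat N c u) ` Lambda_c N c)
      \<and> gen_lattice N (N - 1) (Lw c l w) =
          gen_lattice N (N - 1)
            (\<lambda>i k. (if k = 1 then - of_int (u (i + 1)) else 0)
                  + (if k = i + 1 then 1 / c (i + 1) else 0)))
   \<and> (\<forall>i\<in>{1..N-1}. \<forall>j\<in>{1..N-1}.
        (\<lambda>w::nat. (1 / (real w)^2) * (\<Sum>k=1..N. Lw c l w i k * Lw c l w j k))
          \<longlonglongrightarrow> (\<Sum>k=1..N-1. l i k * l j k))"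
proof -
  have N1: "N \<ge> 1" using N2 by simp
  have c_nz: "\<forall>k\<in>{1..N}. c k \<noteq> 0"
  proof
    fix k assume "k \<in> {1..N}"
    then have "k = 1 \<or> k \<in> {2..N}" by auto
    then show "c k \<noteq> 0" using c_pos c1 by fastforce
  qed
  show ?thesis
  proof (intro conjI allI ballI)
    fix w :: nat
    obtain u where "gen_lattice N (N - 1) (Lw c l w) = gen_lattice N (N - 1) (dual_proj_basis c u)"
      using gen_lattice_Lw_eq_dual_proj_basis[where c=c, OF c1] by blast
    moreover have "gen_lattice N (N - 1) (dual_proj_basis c u) =
        dual N (proj_perp N (uhat N c u) ` Lambda_c N c)"
      by (rule gen_lattice_dual_proj_basis_eq_dual_proj[OF N1 c1 c_nz])
    ultimately show "\<exists>u. gen_lattice N (N - 1) (Lw c l w) =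
          dual N (proj_perp N (uhat N c u) ` Lambda_c N c)
      \<and> gen_lattice N (N - 1) (Lw c l w) =
          gen_lattice N (N - 1)
            (\<lambda>i k. (if k = 1 then - of_int (u (i + 1)) else 0)
                  + (if k = i + 1 then 1 / c (i + 1) else 0))"
      unfolding dual_proj_basis_def by blast
  next
    fix i j assume "i \<in> {1..N-1}" "j \<in> {1..N-1}"
    then show "(\<lambda>w::nat. (1 / (real w)^2) * (\<Sum>k=1..N. Lw c l w i k * Lw c l w j k))
        \<longlonglongrightarrow> (\<Sum>k=1..N-1. l i k * l j k)"
      by (rule Lw_gram_tendsto[OF c_nz L_lower])
  qed
qed

end
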